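(* Let $\mathcal{A} = (Q,\Sigma,\delta,I,F)$ be a UFA. Suppose its forward determinization has $k$ states and its backward determinization has $\ell$ states. Then there exists a graph $G=(Q,E)$ (on the state set of $\mathcal{A}$) that has at least $k$ cliques and at least $\ell$ cocliques.
   Context: A UFA is an NFA $(Q,\Sigma,\delta,I,F)$ (finite states $Q$, finite alphabet $\Sigma$, transitions $\delta\subseteq Q\times\Sigma\times Q$, initial states $I$, accepting states $F$) in which every word has at most one accepting run. For $S\subseteq Q$, $w\in\Sigma^*$: $\delta(S,w)=\{r\mid\exists q\in S.\ q\xrightarrow{w}r\}$, $\delta^{-1}(w,S)=\{r\mid \exists q\in S.\ r\xrightarrow{w} q\}$. The forward determinization has state set $\{\delta(I,w)\mid w\in\Sigma^*\}$; the backward determinization has state set $\{\delta^{-1}(w,F)\mid w\in\Sigma^*\}$. A graph is a finite simple undirected graph $(V,E)$. A clique is a set $X\subseteq V$ with every two distinct vertices adjacent; a coclique (independent set) is a set $Y\subseteq V$ with no two distinct vertices adjacent. The empty set and singletons count as both cliques and cocliques. *)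

theory Defs
  imports Main
begin

definition nfa :: "'q set \<Rightarrow> 'a set \<Rightarrow> ('q \<times> 'a \<times> 'q) set \<Rightarrow> 'q set \<Rightarrow> 'q set \<Rightarrow> bool" where
  "nfa Q \<Sigma> \<delta> I F \<longleftrightarrow> finite Q \<and> finite \<Sigma> \<and> \<delta> \<subseteq> Q \<times> \<Sigma> \<times> Q \<and> I \<subseteq> Q \<and> F \<subseteq> Q"

fun path :: "('q \<times> 'a \<times> 'q) set \<Rightarrow> 'q \<Rightarrow> 'a list \<Rightarrow> 'q \<Rightarrow> bool" where
  "path \<delta> q [] r \<longleftrightarrow> q = r"
| "path \<delta> q (a # w) r \<longleftrightarrow> (\<exists>p. (q, a, p) \<in> \<delta> \<and> path \<delta> p w r)"

definition delta_set :: "('q \<times> 'a \<times> 'q) set \<Rightarrow> 'q set \<Rightarrow> 'a list \<Rightarrow> 'q set" where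
  "delta_set \<delta> S w = {r. \<exists>q\<in>S. path \<delta> q w r}"

definition delta_inv :: "('q \<times> 'a \<times> 'q) set \<Rightarrow> 'a list \<Rightarrow> 'q set \<Rightarrow> 'q set" where
  "delta_inv \<delta> w S = {r. \<exists>q\<in>S. path \<delta> r w q}"

definition accepting_run :: "('q \<times> 'a \<times> 'q) set \<Rightarrow> 'q set \<Rightarrow> 'q set \<Rightarrow> 'a list \<Rightarrow> 'q list \<Rightarrow> bool" where
  "accepting_run \<delta> I F w qs \<longleftrightarrow>
     length qs = length w + 1 \<and> (\<forall>i < length w. (qs ! i, w ! i, qs ! (i + 1)) \<in> \<delta>)
     \<and> hd qs \<in> I \<and> last qs \<in> F"

definition ufa :: "'q set \<Rightarrow> 'a set \<Rightarrow> ('q \<times> 'a \<times> 'q) set \<Rightarrow> 'q set \<Rightarrow> 'q set \<Rightarrow> bool" where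
  "ufa Q \<Sigma> \<delta> I F \<longleftrightarrow> nfa Q \<Sigma> \<delta> I F \<and>
     (\<forall>w \<in> lists \<Sigma>. \<forall>qs qs'. accepting_run \<delta> I F w qs \<and> accepting_run \<delta> I F w qs' \<longrightarrow> qs = qs')"

definition forward_det_states :: "'a set \<Rightarrow> ('q \<times> 'a \<times> 'q) set \<Rightarrow> 'q set \<Rightarrow> 'q set set" where
  "forward_det_states \<Sigma> \<delta> I = {delta_set \<delta> I w | w. w \<in> lists \<Sigma>}"

definition backward_det_states :: "'a set \<Rightarrow> ('q \<times> 'a \<times> 'q) set \<Rightarrow> 'q set \<Rightarrow> 'q set set" where
  "backward_det_states \<Sigma> \<delta> F = {delta_inv \<delta> w F | w. w \<in> lists \<Sigma>}"

definition simple_graph :: "'v set \<Rightarrow> ('v \<times> 'v) set \<Rightarrow> bool" where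
  "simple_graph V E \<longleftrightarrow> finite V \<and> E \<subseteq> V \<times> V \<and> sym E \<and> (\<forall>v. (v, v) \<notin> E)"

definition clique :: "'v set \<Rightarrow> ('v \<times> 'v) set \<Rightarrow> 'v set \<Rightarrow> bool" where
  "clique V E X \<longleftrightarrow> X \<subseteq> V \<and> (\<forall>x\<in>X. \<forall>y\<in>X. x \<noteq> y \<longrightarrow> (x, y) \<in> E)"

definition coclique :: "'v set \<Rightarrow> ('v \<times> 'v) set \<Rightarrow> 'v set \<Rightarrow> bool" where
  "coclique V E Y \<longleftrightarrow> Y \<subseteq> V \<and> (\<forall>x\<in>Y. \<forall>y\<in>Y. x \<noteq> y \<longrightarrow> (x, y) \<notin> E)"

end

theory Submission
  imports Defs
begin

text \<open>Join two distinct states whenever some state of the forward determinization contains both.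
  Every such state is then a clique. By unambiguity a forward set \<open>\<delta>(I,u)\<close> and a backward set
  \<open>\<delta>\<^sup>-\<^sup>1(v,F)\<close> share at most one state: two common states would give two accepting runs on
  \<open>uv\<close> that differ at position \<open>|u|\<close>. Hence every state of the backward determinization is
  a coclique.\<close>

definition comembership_graph :: "'v set set \<Rightarrow> ('v \<times> 'v) set" where
  "comembership_graph \<X> = {(p, q). p \<noteq> q \<and> (\<exists>X\<in>\<X>. p \<in> X \<and> q \<in> X)}"

lemma simple_graph_comembership_graph:
  assumes "finite V" and "\<And>X. X \<in> \<X> \<Longrightarrow> X \<subseteq> V"
  shows "simple_graph V (comembership_graph \<X>)"
  using assms by (auto simp: simple_graph_def comembership_graph_def sym_def)

lemma clique_comembership_graph:
  assumes "X \<in> \<X>" and "X \<subseteq> V"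
  shows "clique V (comembership_graph \<X>) X"
  using assms by (auto simp: clique_def comembership_graph_def)

lemma coclique_comembership_graph:
  assumes "Y \<subseteq> V" and "\<And>X p q. X \<in> \<X> \<Longrightarrow> p \<in> X \<inter> Y \<Longrightarrow> q \<in> X \<inter> Y \<Longrightarrow> p = q"
  shows "coclique V (comembership_graph \<X>) Y"
  using assms by (auto simp: coclique_def comembership_graph_def)

lemma finite_cliques: "finite V \<Longrightarrow> finite {X. clique V E X}"
  by (rule finite_subset[of _ "Pow V"]) (auto simp: clique_def)

lemma finite_cocliques: "finite V \<Longrightarrow> finite {Y. coclique V E Y}"
  by (rule finite_subset[of _ "Pow V"]) (auto simp: coclique_def)

lemma path_target_in:
  "path \<delta> q w r \<Longrightarrow> q \<in> Q \<Longrightarrow> \<delta> \<subseteq> Q \<times> \<Sigma> \<times> Q \<Longrightarrow> r \<in> Q"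
  by (induction w arbitrary: q) auto

lemma path_source_in:
  "path \<delta> q w r \<Longrightarrow> r \<in> Q \<Longrightarrow> \<delta> \<subseteq> Q \<times> \<Sigma> \<times> Q \<Longrightarrow> q \<in> Q"
  by (induction w arbitrary: q) auto

lemma forward_det_states_subset:
  assumes "\<delta> \<subseteq> Q \<times> \<Sigma> \<times> Q" and "I \<subseteq> Q" and "X \<in> forward_det_states \<Sigma> \<delta> I"
  shows "X \<subseteq> Q"
  using assms path_target_in[of \<delta> _ _ _ Q \<Sigma>]
  by (auto simp: forward_det_states_def delta_set_def)

lemma backward_det_states_subset:
  assumes "\<delta> \<subseteq> Q \<times> \<Sigma> \<times> Q" and "F \<subseteq> Q" and "Y \<in> backward_det_states \<Sigma> \<delta> F"
  shows "Y \<subseteq> Q"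
  using assms path_source_in[of \<delta> _ _ _ Q \<Sigma>]
  by (auto simp: backward_det_states_def delta_inv_def)

definition is_run :: "('q \<times> 'a \<times> 'q) set \<Rightarrow> 'a list \<Rightarrow> 'q list \<Rightarrow> bool" where
  "is_run \<delta> w qs \<longleftrightarrow> length qs = length w + 1 \<and> (\<forall>i < length w. (qs ! i, w ! i, qs ! (i + 1)) \<in> \<delta>)"

lemma accepting_run_iff:
  "accepting_run \<delta> I F w qs \<longleftrightarrow> is_run \<delta> w qs \<and> hd qs \<in> I \<and> last qs \<in> F"
  by (auto simp: accepting_run_def is_run_def)

lemma is_run_nonempty: "is_run \<delta> w qs \<Longrightarrow> qs \<noteq> []"
  by (auto simp: is_run_def)

lemma is_run_Cons:
  assumes "is_run \<delta> w qs" and "(q, a, hd qs) \<in> \<delta>"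
  shows "is_run \<delta> (a # w) (q # qs)"
  unfolding is_run_def
proof (intro conjI allI impI)
  show "length (q # qs) = length (a # w) + 1"
    using assms(1) by (simp add: is_run_def)
next
  fix i assume i: "i < length (a # w)"
  show "((q # qs) ! i, (a # w) ! i, (q # qs) ! (i + 1)) \<in> \<delta>"
  proof (cases i)
    case 0
    then show ?thesis using assms(2) is_run_nonempty[OF assms(1)] by (simp add: hd_conv_nth)
  next
    case (Suc j)
    then show ?thesis using assms(1) i by (simp add: is_run_def)
  qed
qed

lemma path_imp_run:
  "path \<delta> q w r \<Longrightarrow> \<exists>qs. is_run \<delta> w qs \<and> hd qs = q \<and> last qs = r"
proof (induction w arbitrary: q)
  case Nil
  then show ?case by (intro exI[of _ "[q]"]) (simp add: is_run_def)
next
  case (Cons a w)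
  then obtain p where "(q, a, p) \<in> \<delta>" "path \<delta> p w r"
    by auto
  moreover from Cons.IH[OF \<open>path \<delta> p w r\<close>] obtain qs
    where "is_run \<delta> w qs" "hd qs = p" "last qs = r"
    by blast
  moreover have "qs \<noteq> []"
    using is_run_nonempty[OF \<open>is_run \<delta> w qs\<close>] .
  ultimately show ?case
    by (intro exI[of _ "q # qs"]) (simp add: is_run_Cons)
qed

lemma path_append_run:
  assumes "path \<delta> q u p" and "is_run \<delta> v qs" and "hd qs = p"
  shows "\<exists>qs'. is_run \<delta> (u @ v) qs' \<and> hd qs' = q \<and> last qs' = last qs \<and> qs' ! length u = p"
  using assms(1)
proof (induction u arbitrary: q)
  case Nil
  then show ?case
    using assms(2,3) is_run_nonempty[OF assms(2)] by (intro exI[of _ qs]) (auto simp: hd_conv_nth)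
next
  case (Cons a u)
  then obtain q' where "(q, a, q') \<in> \<delta>" "path \<delta> q' u p"
    by auto
  moreover from Cons.IH[OF \<open>path \<delta> q' u p\<close>] obtain qs'
    where "is_run \<delta> (u @ v) qs'" "hd qs' = q'" "last qs' = last qs" "qs' ! length u = p"
    by blast
  moreover have "qs' \<noteq> []"
    using is_run_nonempty[OF \<open>is_run \<delta> (u @ v) qs'\<close>] .
  ultimately show ?case
    by (intro exI[of _ "q # qs'"]) (simp add: is_run_Cons)
qed

lemma accepting_run_through:
  assumes "q \<in> delta_set \<delta> I u" and "q \<in> delta_inv \<delta> v F"
  shows "\<exists>qs. accepting_run \<delta> I F (u @ v) qs \<and> qs ! length u = q"
proof -
  obtain a b where "a \<in> I" "path \<delta> a u q" "b \<in> F" "path \<delta> q v b"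
    using assms by (auto simp: delta_set_def delta_inv_def)
  moreover obtain qs where "is_run \<delta> v qs" "hd qs = q" "last qs = b"
    using path_imp_run[OF \<open>path \<delta> q v b\<close>] by blast
  ultimately obtain qs' where "is_run \<delta> (u @ v) qs'" "hd qs' = a" "last qs' = b" "qs' ! length u = q"
    using path_append_run by metis
  then show ?thesis
    using \<open>a \<in> I\<close> \<open>b \<in> F\<close> by (auto simp: accepting_run_iff)
qed

lemma ufa_forward_backward_meet_at_most_once:
  assumes "ufa Q \<Sigma> \<delta> I F" and "u \<in> lists \<Sigma>" and "v \<in> lists \<Sigma>"
    and "p \<in> delta_set \<delta> I u \<inter> delta_inv \<delta> v F" and "q \<in> delta_set \<delta> I u \<inter> delta_inv \<delta> v F"
  shows "p = q"
proof -
  obtain ps where ps: "accepting_run \<delta> I F (u @ v) ps" "ps ! length u = p"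
    using accepting_run_through[of p \<delta> I u v F] assms(4) by blast
  obtain qs where qs: "accepting_run \<delta> I F (u @ v) qs" "qs ! length u = q"
    using accepting_run_through[of q \<delta> I u v F] assms(5) by blast
  have "u @ v \<in> lists \<Sigma>"
    using assms(2,3) by simp
  then have "ps = qs"
    using assms(1) ps(1) qs(1) unfolding ufa_def by blast
  then show ?thesis
    using ps(2) qs(2) by simp
qed

theorem lemma2:
  fixes Q :: "'q set" and \<Sigma> :: "'a set" and \<delta> :: "('q \<times> 'a \<times> 'q) set" and I F :: "'q set"
    and k l :: nat
  assumes "ufa Q \<Sigma> \<delta> I F"
    and "card (forward_det_states \<Sigma> \<delta> I) = k"
    and "card (backward_det_states \<Sigma> \<delta> F) = l"
  shows "\<exists>E. simple_graph Q E \<and> card {X. clique Q E X} \<ge> k \<and> card {Y. coclique Q E Y} \<ge> l"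
proof -
  let ?E = "comembership_graph (forward_det_states \<Sigma> \<delta> I)"
  have Q: "finite Q" "\<delta> \<subseteq> Q \<times> \<Sigma> \<times> Q" "I \<subseteq> Q" "F \<subseteq> Q"
    using assms(1) by (auto simp: ufa_def nfa_def)
  have graph: "simple_graph Q ?E"
    by (rule simple_graph_comembership_graph[OF Q(1) forward_det_states_subset[OF Q(2,3)]])
  have cliques: "forward_det_states \<Sigma> \<delta> I \<subseteq> {X. clique Q ?E X}"
    using clique_comembership_graph forward_det_states_subset[OF Q(2,3)] by blast
  have cocliques: "backward_det_states \<Sigma> \<delta> F \<subseteq> {Y. coclique Q ?E Y}"
  proof (rule subsetI, rule CollectI, rule coclique_comembership_graph)
    fix Y assume Y: "Y \<in> backward_det_states \<Sigma> \<delta> F"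
    then show "Y \<subseteq> Q"
      by (rule backward_det_states_subset[OF Q(2,4)])
    fix X p q assume "X \<in> forward_det_states \<Sigma> \<delta> I" "p \<in> X \<inter> Y" "q \<in> X \<inter> Y"
    moreover obtain u where "u \<in> lists \<Sigma>" "X = delta_set \<delta> I u"
      using \<open>X \<in> forward_det_states \<Sigma> \<delta> I\<close> by (auto simp: forward_det_states_def)
    moreover obtain v where "v \<in> lists \<Sigma>" "Y = delta_inv \<delta> v F"
      using Y by (auto simp: backward_det_states_def)
    ultimately show "p = q"
      using ufa_forward_backward_meet_at_most_once[OF assms(1)] by blast
  qed
  show ?thesis
    using graph card_mono[OF finite_cliques[OF Q(1)] cliques]
      card_mono[OF finite_cocliques[OF Q(1)] cocliques]
    unfolding assms(2,3) by blast
qed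

end
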